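(* Let $a,\omega\in\mathbb{R}$ and on $T^*\mathbb{R}^2$ with coordinates ordered as $(p_x,p_y,x,y)$ consider \[H_{\mathrm{SK}}=\tfrac12(p_x^2+p_y^2)+\tfrac{\omega}{2}(x^2+y^2)+axy^2+\tfrac a3x^3,\qquad F_{\mathrm{SK}}=p_xp_y+\omega xy+ax^2y+\tfrac a3y^3.\] Let $X$ be the vector field with components $X^{p_x}=-\frac{xp_x+yp_y}{\sqrt2}$, $X^{p_y}=-\frac{yp_x+xp_y}{\sqrt2}$, $X^x=X^y=0$, let $P_1=\mathcal L_XP_0=-(J_XP_0+P_0J_X^{\top})$ ($J_X$ the Jacobian matrix of $X$), $N=P_1P_0^{-1}$ and $N^*=P_0^{-1}P_1$. Then, with covectors written as column vectors of partial derivatives in the order $(p_x,p_y,x,y)$, \[N^*dH_{\mathrm{SK}}=\tfrac{x}{\sqrt2}\,dH_{\mathrm{SK}}+\tfrac{y}{\sqrt2}\,dF_{\mathrm{SK}},\qquad N^*dF_{\mathrm{SK}}=\tfrac{y}{\sqrt2}\,dH_{\mathrm{SK}}+\tfrac{x}{\sqrt2}\,dF_{\mathrm{SK}},\] so that the control matrix has eigenvalues $u_1=\frac{x+y}{\sqrt2}$, $u_2=\frac{x-y}{\sqrt2}$. Moreover, with $v_1=\frac{p_x+p_y}{\sqrt2}$, $v_2=\frac{p_x-p_y}{\sqrt2}$, one has $p_x\,dx+p_y\,dy=v_1\,du_1+v_2\,du_2$ and \[H_{\mathrm{SK}}=H_1+H_2,\qquad F_{\mathrm{SK}}=H_1-H_2,\qquad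 H_i=\tfrac12v_i^2+\tfrac{\omega}{2}u_i^2+\tfrac{\sqrt2\,a}{3}u_i^3\ (i=1,2),\] so that the Hamilton equations of $H_{\mathrm{SK}}$ split into the two decoupled systems $\ddot u_i+\omega u_i+\sqrt2\,a\,u_i^2=0$, $i=1,2$.
   Context: $P_0$ is the canonical Poisson tensor on $T^*\mathbb{R}^2$, which in the ordering $(p_x,p_y,x,y)$ is the matrix $\begin{pmatrix}0&-I_2\\ I_2&0\end{pmatrix}$, corresponding to the bracket with $\{x,p_x\}_0=\{y,p_y\}_0=1$. *)

theory Defs
  imports "HOL-Analysis.Analysis"
begin

type_synonym state = "real^4"

definition px :: "state \<Rightarrow> real" where "px z = z $ 1"
definition py :: "state \<Rightarrow> real" where "py z = z $ 2"
definition qx :: "state \<Rightarrow> real" where "qx z = z $ 3"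
definition qy :: "state \<Rightarrow> real" where "qy z = z $ 4"

definition grad :: "(state \<Rightarrow> real) \<Rightarrow> state \<Rightarrow> real^4" where
  "grad f z = (\<chi> i. frechet_derivative f (at z) (axis i 1))"

text \<open>Canonical Poisson tensor P0 = [[0,-I],[I,0]].\<close>
definition P0 :: "real^4^4" where
  "P0 = (\<chi> i j. if i = 1 \<and> j = 3 then -1 else if i = 2 \<and> j = 4 then -1
               else if i = 3 \<and> j = 1 then 1 else if i = 4 \<and> j = 2 then 1 else 0)"

definition H_SK :: "real \<Rightarrow> real \<Rightarrow> state \<Rightarrow> real" where
  "H_SK a \<omega> z = (px z ^ 2 + py z ^ 2) / 2 + \<omega> / 2 * (qx z ^ 2 + qy z ^ 2)
                 + a * qx z * qy z ^ 2 + a / 3 * qx z ^ 3"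

definition F_SK :: "real \<Rightarrow> real \<Rightarrow> state \<Rightarrow> real" where
  "F_SK a \<omega> z = px z * py z + \<omega> * qx z * qy z + a * qx z ^ 2 * qy z + a / 3 * qy z ^ 3"

definition Xf :: "state \<Rightarrow> real^4" where
  "Xf z = (\<chi> i. if i = 1 then - (qx z * px z + qy z * py z) / sqrt 2
              else if i = 2 then - (qy z * px z + qx z * py z) / sqrt 2
              else 0)"

text \<open>J_X: Jacobian matrix of X, (J_X)_{ij} = dX^i / dz_j.\<close>
definition JX :: "state \<Rightarrow> real^4^4" where
  "JX z = jacobian Xf (at z)"

text \<open>P1 = L_X P0 = -(J_X P0 + P0 J_X^T).\<close>
definition P1 :: "state \<Rightarrow> real^4^4" where
  "P1 z = - (JX z ** P0 + P0 ** transpose (JX z))"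

definition Nrec :: "state \<Rightarrow> real^4^4" where
  "Nrec z = P1 z ** matrix_inv P0"

definition Nstar :: "state \<Rightarrow> real^4^4" where
  "Nstar z = matrix_inv P0 ** P1 z"

definition u1 :: "state \<Rightarrow> real" where "u1 z = (qx z + qy z) / sqrt 2"
definition u2 :: "state \<Rightarrow> real" where "u2 z = (qx z - qy z) / sqrt 2"
definition v1 :: "state \<Rightarrow> real" where "v1 z = (px z + py z) / sqrt 2"
definition v2 :: "state \<Rightarrow> real" where "v2 z = (px z - py z) / sqrt 2"

definition Hi :: "real \<Rightarrow> real \<Rightarrow> real \<Rightarrow> real \<Rightarrow> real" where
  "Hi a \<omega> u v = v ^ 2 / 2 + \<omega> / 2 * u ^ 2 + sqrt 2 * a / 3 * u ^ 3"

definition H1 :: "real \<Rightarrow> real \<Rightarrow> state \<Rightarrow> real" where "H1 a \<omega> z = Hi a \<omega> (u1 z) (v1 z)"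
definition H2 :: "real \<Rightarrow> real \<Rightarrow> state \<Rightarrow> real" where "H2 a \<omega> z = Hi a \<omega> (u2 z) (v2 z)"

text \<open>Control matrix: N* (dH, dF) = C (dH, dF).\<close>
definition control :: "state \<Rightarrow> real^2^2" where
  "control z = (\<chi> i j. if i = j then qx z / sqrt 2 else qy z / sqrt 2)"

end

theory Submission
  imports Defs
begin

(* N* = (x I + y S) / sqrt 2, where the involution S exchanges p_x with p_y and x with y, and
   S maps dH_SK to dF_SK.  Hence N* acts on span {dH_SK, dF_SK} by the matrix [[x, y], [y, x]] / sqrt 2,
   whose eigenvalues are (x +- y) / sqrt 2.  The coordinates along the (+-1)-eigenvectors of S are
   canonical, and in them the cubic potential separates, because (x + y)^3 +- (x - y)^3 reproduce the
   cubic terms of H_SK and F_SK; Hamilton's equations for these linear observables then decouple. *)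

definition vec4 :: "'a \<Rightarrow> 'a \<Rightarrow> 'a \<Rightarrow> 'a \<Rightarrow> 'a^4" where
  "vec4 a b c d = (\<chi> i. if i = 1 then a else if i = 2 then b else if i = 3 then c else d)"

lemma vec4_nth [simp]:
  "vec4 a b c d $ 1 = a" "vec4 a b c d $ 2 = b" "vec4 a b c d $ 3 = c" "vec4 a b c d $ 4 = d"
  by (simp_all add: vec4_def)

lemma inner_vec4: "vec4 a b c d \<bullet> h = a * h$1 + b * h$2 + c * h$3 + d * h$4"
  by (simp add: inner_vec_def sum_4)

lemma matrix_inv_unique:
  fixes A B :: "'a::semiring_1^'n^'n"
  assumes "A ** B = mat 1" and "B ** A = mat 1"
  shows "matrix_inv A = B"
proof -
  have "C = B" if "A ** C = mat 1 \<and> C ** A = mat 1" for C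
    by (metis assms(2) matrix_mul_assoc matrix_mul_rid that)
  then show ?thesis
    unfolding matrix_inv_def using someI[of "\<lambda>C. A ** C = mat 1 \<and> C ** A = mat 1" B] assms
    by blast
qed

lemma has_derivative_vec_nth [derivative_intros]:
  "((\<lambda>z. z $ i) has_derivative (\<lambda>h. h $ i)) F"
  by (rule bounded_linear_imp_has_derivative) (rule bounded_linear_vec_nth)

lemma grad_eqI:
  assumes "(f has_derivative (\<lambda>h. g \<bullet> h)) (at z)"
  shows "grad f z = g"
  by (simp add: grad_def frechet_derivative_at[OF assms, symmetric] vec_eq_iff inner_axis)

lemma grad_inner: "grad (\<lambda>z. c \<bullet> z) z = c"
  by (rule grad_eqI) (rule bounded_linear_imp_has_derivative[OF bounded_linear_inner_right])

lemma has_real_derivative_inner: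
  fixes \<gamma> :: "real \<Rightarrow> 'a::real_inner"
  assumes "(\<gamma> has_vector_derivative \<gamma>') F"
  shows "((\<lambda>s. c \<bullet> \<gamma> s) has_real_derivative c \<bullet> \<gamma>') F"
  using bounded_linear.has_vector_derivative[OF bounded_linear_inner_right assms]
  by (simp add: has_real_derivative_iff_has_vector_derivative)

lemma jacobian_eqI:
  fixes f :: "real^'n \<Rightarrow> real^'m"
  assumes "(f has_derivative (\<lambda>h. A *v h)) (at z)"
  shows "jacobian f (at z) = A"
  by (simp add: jacobian_def frechet_derivative_at[OF assms, symmetric])

lemma P0_vec4: "P0 *v vec4 a b c d = vec4 (- c) (- d) a b"
  by (simp add: P0_def matrix_vector_mult_def vec_eq_iff forall_4 sum_4)

lemma matrix_inv_P0: "matrix_inv P0 = - P0"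
  by (rule matrix_inv_unique)
     (simp_all add: P0_def matrix_matrix_mult_def vec_eq_iff forall_4 sum_4 mat_def)

lemma grad_H_SK: "grad (H_SK a \<omega>) z = vec4 (px z) (py z)
    (\<omega> * qx z + a * qx z ^ 2 + a * qy z ^ 2) (\<omega> * qy z + 2 * a * qx z * qy z)"
  unfolding H_SK_def px_def py_def qx_def qy_def
  by (rule grad_eqI, (rule derivative_eq_intros refl | simp)+)
     (auto simp: inner_vec4 field_simps power2_eq_square)

lemma grad_F_SK: "grad (F_SK a \<omega>) z = vec4 (py z) (px z)
    (\<omega> * qy z + 2 * a * qx z * qy z) (\<omega> * qx z + a * qx z ^ 2 + a * qy z ^ 2)"
  unfolding F_SK_def px_def py_def qx_def qy_def
  by (rule grad_eqI, (rule derivative_eq_intros refl | simp)+)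
     (auto simp: inner_vec4 field_simps power2_eq_square)

definition swap_xy :: "real^4^4" where
  "swap_xy = vec4 (vec4 0 1 0 0) (vec4 1 0 0 0) (vec4 0 0 0 1) (vec4 0 0 1 0)"

lemma swap_xy_vec4: "swap_xy *v vec4 a b c d = vec4 b a d c"
  by (simp add: swap_xy_def matrix_vector_mult_def vec_eq_iff forall_4 sum_4)

lemma swap_xy_swap_xy: "swap_xy *v (swap_xy *v v) = v"
  by (simp add: swap_xy_def matrix_vector_mult_def vec_eq_iff forall_4 sum_4)

lemma grad_F_SK_eq_swap: "grad (F_SK a \<omega>) z = swap_xy *v grad (H_SK a \<omega>) z"
  by (simp add: grad_H_SK grad_F_SK swap_xy_vec4)

lemma Xf_eq: "Xf = (\<lambda>z. (- (z$3 * z$1 + z$4 * z$2) / sqrt 2) *\<^sub>R axis 1 1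
                 + (- (z$4 * z$1 + z$3 * z$2) / sqrt 2) *\<^sub>R axis 2 1)"
  by (auto simp: Xf_def vec_eq_iff forall_4 axis_def px_def py_def qx_def qy_def)

lemma JX_eq: "JX z = - (1 / sqrt 2) *\<^sub>R
    vec4 (vec4 (qx z) (qy z) (px z) (py z)) (vec4 (qy z) (qx z) (py z) (px z)) 0 0"
  unfolding JX_def Xf_eq
  by (rule jacobian_eqI, (rule derivative_eq_intros refl | simp)+)
     (simp add: fun_eq_iff vec_eq_iff forall_4 matrix_vector_mult_def sum_4 axis_def field_simps
       px_def py_def qx_def qy_def)

lemma Nstar_eq: "Nstar z = (qx z / sqrt 2) *\<^sub>R mat 1 + (qy z / sqrt 2) *\<^sub>R swap_xy"
  unfolding Nstar_def P1_def matrix_inv_P0 JX_eq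
  by (simp add: P0_def swap_xy_def matrix_matrix_mult_def vec_eq_iff forall_4 sum_4 transpose_def
      mat_def)

lemma Nstar_mult: "Nstar z *v v = (qx z / sqrt 2) *\<^sub>R v + (qy z / sqrt 2) *\<^sub>R (swap_xy *v v)"
  by (simp add: Nstar_eq matrix_vector_mult_add_rdistrib scaleR_matrix_vector_assoc[symmetric])

lemma det_control: "det (mat l - control z) = (l - u1 z) * (l - u2 z)"
  by (simp add: det_2 control_def mat_def u1_def u2_def field_simps power2_eq_square)

(* sigma = 1 and sigma = -1 give (u1, v1) and (u2, v2), the coordinates along the eigenvectors
   of swap_xy. *)
definition normal_q :: "real \<Rightarrow> state \<Rightarrow> real" where
  "normal_q \<sigma> z = (qx z + \<sigma> * qy z) / sqrt 2"

definition normal_p :: "real \<Rightarrow> state \<Rightarrow> real" where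
  "normal_p \<sigma> z = (px z + \<sigma> * py z) / sqrt 2"

lemma normal_coordinates:
  "u1 = normal_q 1" "u2 = normal_q (- 1)" "v1 = normal_p 1" "v2 = normal_p (- 1)"
  by (simp_all add: fun_eq_iff u1_def u2_def v1_def v2_def normal_q_def normal_p_def)

lemma qx_eq_inner: "qx z = vec4 0 0 1 0 \<bullet> z"
  by (simp add: inner_vec4 qx_def)

lemma qy_eq_inner: "qy z = vec4 0 0 0 1 \<bullet> z"
  by (simp add: inner_vec4 qy_def)

lemma normal_q_eq_inner: "normal_q \<sigma> z = vec4 0 0 (1 / sqrt 2) (\<sigma> / sqrt 2) \<bullet> z"
  by (simp add: inner_vec4 normal_q_def qx_def qy_def add_divide_distrib)

lemma normal_p_eq_inner: "normal_p \<sigma> z = vec4 (1 / sqrt 2) (\<sigma> / sqrt 2) 0 0 \<bullet> z"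
  by (simp add: inner_vec4 normal_p_def px_def py_def add_divide_distrib)

lemma grad_coordinates:
  "grad qx z = vec4 0 0 1 0" "grad qy z = vec4 0 0 0 1"
  "grad (normal_q \<sigma>) z = vec4 0 0 (1 / sqrt 2) (\<sigma> / sqrt 2)"
  unfolding qx_eq_inner[abs_def] qy_eq_inner[abs_def] normal_q_eq_inner[abs_def]
  by (rule grad_inner)+

lemma liouville_form_normal_coordinates:
  "px z *\<^sub>R grad qx z + py z *\<^sub>R grad qy z = v1 z *\<^sub>R grad u1 z + v2 z *\<^sub>R grad u2 z"
  by (simp add: normal_coordinates grad_coordinates vec_eq_iff forall_4 normal_p_def field_simps)

lemma sqrt2_cube: "sqrt 2 ^ 3 = 2 * sqrt (2::real)"
  by (simp add: power3_eq_cube)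

lemma Hi_rotated:
  "Hi a \<omega> ((x + y) / sqrt 2) ((p + q) / sqrt 2) + Hi a \<omega> ((x - y) / sqrt 2) ((p - q) / sqrt 2)
     = (p\<^sup>2 + q\<^sup>2) / 2 + \<omega> / 2 * (x\<^sup>2 + y\<^sup>2) + a * x * y\<^sup>2 + a / 3 * x ^ 3"
  "Hi a \<omega> ((x + y) / sqrt 2) ((p + q) / sqrt 2) - Hi a \<omega> ((x - y) / sqrt 2) ((p - q) / sqrt 2)
     = p * q + \<omega> * x * y + a * x\<^sup>2 * y + a / 3 * y ^ 3"
  by (simp_all add: Hi_def sqrt2_cube field_simps)
     (simp_all add: power2_eq_square power3_eq_cube algebra_simps)

lemma H_SK_eq_H1_add_H2: "H_SK a \<omega> z = H1 a \<omega> z + H2 a \<omega> z"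
  by (simp add: H_SK_def H1_def H2_def u1_def u2_def v1_def v2_def Hi_rotated(1))

lemma F_SK_eq_H1_diff_H2: "F_SK a \<omega> z = H1 a \<omega> z - H2 a \<omega> z"
  by (simp add: F_SK_def H1_def H2_def u1_def u2_def v1_def v2_def Hi_rotated(2))

lemma has_real_derivative_normal_q:
  assumes "(\<gamma> has_vector_derivative P0 *v grad (H_SK a \<omega>) (\<gamma> t)) (at t)"
  shows "((\<lambda>s. normal_q \<sigma> (\<gamma> s)) has_real_derivative normal_p \<sigma> (\<gamma> t)) (at t)"
proof -
  have "vec4 0 0 (1 / sqrt 2) (\<sigma> / sqrt 2) \<bullet> (P0 *v grad (H_SK a \<omega>) (\<gamma> t))
      = normal_p \<sigma> (\<gamma> t)"
    by (simp add: grad_H_SK P0_vec4 inner_vec4 normal_p_def add_divide_distrib)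
  then show ?thesis
    using has_real_derivative_inner[OF assms, where c = "vec4 0 0 (1 / sqrt 2) (\<sigma> / sqrt 2)"]
    by (simp add: normal_q_eq_inner)
qed

lemma has_real_derivative_normal_p:
  assumes "(\<gamma> has_vector_derivative P0 *v grad (H_SK a \<omega>) (\<gamma> t)) (at t)" and "\<sigma>\<^sup>2 = 1"
  shows "((\<lambda>s. normal_p \<sigma> (\<gamma> s)) has_real_derivative
           - (\<omega> * normal_q \<sigma> (\<gamma> t) + sqrt 2 * a * normal_q \<sigma> (\<gamma> t) ^ 2)) (at t)"
proof -
  have "vec4 (1 / sqrt 2) (\<sigma> / sqrt 2) 0 0 \<bullet> (P0 *v grad (H_SK a \<omega>) (\<gamma> t))
      = - (\<omega> * normal_q \<sigma> (\<gamma> t) + sqrt 2 * a * normal_q \<sigma> (\<gamma> t) ^ 2)"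
    using assms(2)
    by (simp add: grad_H_SK P0_vec4 inner_vec4 normal_q_def field_simps)
       (simp add: power2_eq_square algebra_simps)
  then show ?thesis
    using has_real_derivative_inner[OF assms(1), where c = "vec4 (1 / sqrt 2) (\<sigma> / sqrt 2) 0 0"]
    by (simp add: normal_p_eq_inner)
qed

theorem mainTheorem4:
  fixes a \<omega> :: real
  shows
    "(\<forall>z. Nstar z *v grad (H_SK a \<omega>) z
          = (qx z / sqrt 2) *\<^sub>R grad (H_SK a \<omega>) z + (qy z / sqrt 2) *\<^sub>R grad (F_SK a \<omega>) z)
   \<and> (\<forall>z. Nstar z *v grad (F_SK a \<omega>) z
          = (qy z / sqrt 2) *\<^sub>R grad (H_SK a \<omega>) z + (qx z / sqrt 2) *\<^sub>R grad (F_SK a \<omega>) z)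
   \<and> (\<forall>z. \<forall>l. det (mat l - control z) = 0 \<longleftrightarrow> l = u1 z \<or> l = u2 z)
   \<and> (\<forall>z. px z *\<^sub>R grad qx z + py z *\<^sub>R grad qy z
          = v1 z *\<^sub>R grad u1 z + v2 z *\<^sub>R grad u2 z)
   \<and> (\<forall>z. H_SK a \<omega> z = H1 a \<omega> z + H2 a \<omega> z)
   \<and> (\<forall>z. F_SK a \<omega> z = H1 a \<omega> z - H2 a \<omega> z)
   \<and> (\<forall>\<gamma> :: real \<Rightarrow> real^4.
        (\<forall>t. (\<gamma> has_vector_derivative (P0 *v grad (H_SK a \<omega>) (\<gamma> t))) (at t)) \<longrightarrow>
        (\<forall>u \<in> {u1, u2}. \<exists>w'. \<forall>t.
            ((\<lambda>s. u (\<gamma> s)) has_real_derivative w' t) (at t) \<and>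
            (w' has_real_derivative (- (\<omega> * u (\<gamma> t) + sqrt 2 * a * u (\<gamma> t) ^ 2))) (at t)))"
proof (intro conjI allI impI ballI)
  fix z
  show "Nstar z *v grad (H_SK a \<omega>) z
          = (qx z / sqrt 2) *\<^sub>R grad (H_SK a \<omega>) z + (qy z / sqrt 2) *\<^sub>R grad (F_SK a \<omega>) z"
    and "Nstar z *v grad (F_SK a \<omega>) z
          = (qy z / sqrt 2) *\<^sub>R grad (H_SK a \<omega>) z + (qx z / sqrt 2) *\<^sub>R grad (F_SK a \<omega>) z"
    by (simp_all add: Nstar_mult grad_F_SK_eq_swap swap_xy_swap_xy add.commute)
next
  fix z l
  show "det (mat l - control z) = 0 \<longleftrightarrow> l = u1 z \<or> l = u2 z"
    by (simp add: det_control)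
next
  fix \<gamma> :: "real \<Rightarrow> real^4" and u
  assume flow: "\<forall>t. (\<gamma> has_vector_derivative P0 *v grad (H_SK a \<omega>) (\<gamma> t)) (at t)"
    and "u \<in> {u1, u2}"
  from \<open>u \<in> {u1, u2}\<close> obtain \<sigma> :: real where \<sigma>: "\<sigma>\<^sup>2 = 1" and u: "u = normal_q \<sigma>"
    unfolding normal_coordinates by (auto intro: that[of 1] that[of "- 1"])
  show "\<exists>w'. \<forall>t. ((\<lambda>s. u (\<gamma> s)) has_real_derivative w' t) (at t) \<and>
      (w' has_real_derivative - (\<omega> * u (\<gamma> t) + sqrt 2 * a * u (\<gamma> t) ^ 2)) (at t)"
    unfolding u
    by (intro exI[where x = "\<lambda>t. normal_p \<sigma> (\<gamma> t)"] allI conjI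
        has_real_derivative_normal_q[OF flow[rule_format]]
        has_real_derivative_normal_p[OF flow[rule_format] \<sigma>])
qed (simp_all add: liouville_form_normal_coordinates H_SK_eq_H1_add_H2 F_SK_eq_H1_diff_H2)

end
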